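(* Let $p$ be an odd prime, $q$ a power of $p$, $R=\mathbb{F}_q[t]$, $K=\mathbb{F}_q(t)$, $K^{\rm sep}$ a separable closure of $K$, and $\mathcal{O}_{K^{\rm sep}}$ the integral closure of $R$ in $K^{\rm sep}$. Let $S$ be any subring of $\mathcal{O}_{K^{\rm sep}}$ containing $R$. Then: (a) for every finite set $A\subseteq S$ there exists $x\in S$, neither zero nor a unit of $S$, such that $(x)+(a_i)=S$ for every $a_i\in A\setminus\{0\}$; (b) for every finite set $A\subseteq S$ with $0\notin A$ and every $a\in S$ that is neither zero nor a unit, there exists $g\in S$ such that: for every $a_i\in A$, $1+a_ig$ is neither zero nor a unit; for every $a_i\in A$, $(a)+(1+a_ig)=S$; and for distinct $a_i,a_j\in A$, $(1+a_ig)+(1+a_jg)=S$. (All ideals are ideals of $S$.) *)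

theory Defs
  imports "HOL-Computational_Algebra.Polynomial" "HOL-Computational_Algebra.Fraction_Field"
begin

definition is_ring_hom :: "('a::ring_1 \<Rightarrow> 'b::ring_1) \<Rightarrow> bool" where
  "is_ring_hom h \<longleftrightarrow> h 1 = 1 \<and> (\<forall>x y. h (x + y) = h x + h y) \<and> (\<forall>x y. h (x * y) = h x * h y)"

definition separable_poly :: "'a::field poly \<Rightarrow> bool" where
  "separable_poly f \<longleftrightarrow> coprime f (pderiv f)"

definition separable_over :: "('K::field \<Rightarrow> 'L::field) \<Rightarrow> 'L \<Rightarrow> bool" where
  "separable_over \<phi> x \<longleftrightarrow> (\<exists>f. f \<noteq> 0 \<and> separable_poly f \<and> poly (map_poly \<phi> f) x = 0)"

definition splits_in :: "('K::field \<Rightarrow> 'L::field) \<Rightarrow> 'K poly \<Rightarrow> bool" where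
  "splits_in \<phi> f \<longleftrightarrow> (\<exists>c xs. map_poly \<phi> f = smult c (\<Prod>x\<leftarrow>xs. [:- x, 1:]))"

definition is_separable_closure :: "('K::field \<Rightarrow> 'L::field) \<Rightarrow> bool" where
  "is_separable_closure \<phi> \<longleftrightarrow> is_ring_hom \<phi> \<and> (\<forall>x. separable_over \<phi> x)
     \<and> (\<forall>f. separable_poly f \<longrightarrow> splits_in \<phi> f)"

definition integral_closure :: "('R::comm_ring_1 \<Rightarrow> 'L::field) \<Rightarrow> 'L set" where
  "integral_closure i = {x. \<exists>f. lead_coeff f = 1 \<and> poly (map_poly i f) x = 0}"

definition is_subring :: "'L::comm_ring_1 set \<Rightarrow> bool" where
  "is_subring S \<longleftrightarrow> 0 \<in> S \<and> 1 \<in> S \<and> (\<forall>x\<in>S. \<forall>y\<in>S. x + y \<in> S \<and> x - y \<in> S \<and> x * y \<in> S)"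

definition unit_in :: "'L::comm_ring_1 set \<Rightarrow> 'L \<Rightarrow> bool" where
  "unit_in S x \<longleftrightarrow> (\<exists>y\<in>S. x * y = 1)"

definition pideal :: "'L::comm_ring_1 set \<Rightarrow> 'L \<Rightarrow> 'L set" where
  "pideal S x = {s * x | s. s \<in> S}"

definition ideal_sum :: "'L::comm_ring_1 set \<Rightarrow> 'L set \<Rightarrow> 'L set" where
  "ideal_sum I J = {a + b | a b. a \<in> I \<and> b \<in> J}"

end

theory Submission
  imports Defs
begin

text \<open>
  Let \<open>\<iota> : R \<rightarrow> L\<close> embed \<open>R = \<bbbF>\<^sub>q[t]\<close> and let \<open>S \<supseteq> \<iota> R\<close> be integral over \<open>R\<close>. Two facts about
  this extension carry the whole argument. Every nonzero \<open>b \<in> S\<close> divides in \<open>S\<close> a nonzero element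
  \<open>\<iota> c\<close> of \<open>R\<close>, namely the (nonzero) lowest coefficient of a monic equation of \<open>b\<close>; and a non-unit
  \<open>X\<close> of \<open>R\<close> stays a non-unit in \<open>S\<close>, since an integral equation for \<open>1 / \<iota> X\<close>, multiplied by a
  power of \<open>\<iota> X\<close>, becomes \<open>1 + X r = 0\<close> in \<open>R\<close>.

  For (a), let \<open>C\<close> be the product of such elements \<open>c\<close> for the nonzero \<open>a \<in> A\<close>; then \<open>x = \<iota> (1 + t C)\<close>
  is a nonzero non-unit with \<open>x - a s = 1\<close> for some \<open>s \<in> S\<close>. For (b), a Chinese-remainder style
  induction yields \<open>h \<in> S\<close> such that every \<open>1 + b h\<close>, \<open>b \<in> B\<close>, has a non-unit factor \<open>\<iota> X\<close>; applied
  to \<open>B = {a\<^sub>i a D}\<close> with \<open>D = \<Prod>(a\<^sub>i - a\<^sub>j)\<close>, the element \<open>g = a D h\<close> works: \<open>1 + a\<^sub>i g \<equiv> 1\<close> modulo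
  \<open>a\<close>, and \<open>a\<^sub>i - a\<^sub>j\<close> divides \<open>g\<close>, which makes \<open>1 + a\<^sub>i g\<close> and \<open>1 + a\<^sub>j g\<close> comaximal.

  Besides integrality, the argument only needs that \<open>\<phi>\<close> is a ring homomorphism and that \<open>R\<close> has
  non-units \<open>1 + t C\<close>.
\<close>

lemma is_ring_homD:
  assumes "is_ring_hom h"
  shows is_ring_hom_1: "h 1 = 1"
    and is_ring_hom_add: "h (x + y) = h x + h y"
    and is_ring_hom_mult: "h (x * y) = h x * h y"
  using assms by (simp_all add: is_ring_hom_def)

lemma is_ring_hom_0: "is_ring_hom h \<Longrightarrow> h 0 = 0"
  using is_ring_hom_add[of h 0 0] by simp

lemma is_ring_hom_uminus: "is_ring_hom h \<Longrightarrow> h (- x) = - h x"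
  using is_ring_hom_add[of h x "- x"] is_ring_hom_0[of h] by (simp add: eq_neg_iff_add_eq_0 add.commute)

lemma is_ring_hom_diff: "is_ring_hom h \<Longrightarrow> h (x - y) = h x - h y"
  using is_ring_hom_add[of h x "- y"] is_ring_hom_uminus[of h y] by simp

lemma is_ring_hom_power: "is_ring_hom h \<Longrightarrow> h (x ^ n) = h x ^ n"
  by (induction n) (simp_all add: is_ring_hom_1 is_ring_hom_mult)

lemma is_ring_hom_field_inj:
  fixes h :: "'a::field \<Rightarrow> 'b::field"
  assumes "is_ring_hom h"
  shows "inj h"
proof (rule injI)
  fix x y assume "h x = h y"
  have "x - y = 0"
  proof (rule ccontr)
    assume "x - y \<noteq> 0"
    then have "h (x - y) * h (inverse (x - y)) = 1"
      using assms by (simp add: is_ring_hom_mult[symmetric] is_ring_hom_1)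
    with \<open>h x = h y\<close> show False by (simp add: is_ring_hom_diff[OF assms])
  qed
  then show "x = y" by simp
qed

lemma is_ring_hom_Fract_1: "is_ring_hom (\<lambda>r. Fract r 1)"
  by (simp add: is_ring_hom_def One_fract_def)

lemma inj_Fract_1: "inj (\<lambda>r::'a::idom. Fract r 1)"
  by (rule injI) (simp add: eq_fract)

lemma is_ring_hom_comp: "is_ring_hom f \<Longrightarrow> is_ring_hom g \<Longrightarrow> is_ring_hom (f \<circ> g)"
  by (simp add: is_ring_hom_def)

lemma is_subringD:
  assumes "is_subring S"
  shows is_subring_0: "0 \<in> S" and is_subring_1: "1 \<in> S"
    and is_subring_add: "x \<in> S \<Longrightarrow> y \<in> S \<Longrightarrow> x + y \<in> S"
    and is_subring_diff: "x \<in> S \<Longrightarrow> y \<in> S \<Longrightarrow> x - y \<in> S"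
    and is_subring_mult: "x \<in> S \<Longrightarrow> y \<in> S \<Longrightarrow> x * y \<in> S"
  using assms by (auto simp: is_subring_def)

lemma is_subring_uminus: "is_subring S \<Longrightarrow> x \<in> S \<Longrightarrow> - x \<in> S"
  using is_subring_diff[of S 0 x] is_subring_0[of S] by simp

lemma is_subring_prod:
  "is_subring S \<Longrightarrow> (\<And>x. x \<in> A \<Longrightarrow> f x \<in> S) \<Longrightarrow> prod f A \<in> S"
  by (induction A rule: infinite_finite_induct) (simp_all add: is_subring_1 is_subring_mult)

lemma ideal_sum_pideal_eq_if_bezout:
  assumes S: "is_subring S" and "x \<in> S" "y \<in> S" "u \<in> S" "v \<in> S" and bezout: "x * u + y * v = 1"
  shows "ideal_sum (pideal S x) (pideal S y) = S"
proof
  show "ideal_sum (pideal S x) (pideal S y) \<subseteq> S"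
    using assms by (auto simp: ideal_sum_def pideal_def intro!: is_subring_add is_subring_mult)
  show "S \<subseteq> ideal_sum (pideal S x) (pideal S y)"
  proof
    fix z assume "z \<in> S"
    have "z = (z * u) * x + (z * v) * y"
      using bezout by (metis mult.commute mult.left_commute mult_1_right distrib_left)
    moreover have "z * u \<in> S" "z * v \<in> S"
      using S \<open>z \<in> S\<close> assms by (auto intro: is_subring_mult)
    ultimately show "z \<in> ideal_sum (pideal S x) (pideal S y)"
      unfolding ideal_sum_def pideal_def by blast
  qed
qed

lemma one_plus_mult_bezout:
  fixes x y e :: "'a::comm_ring_1"
  assumes "g = (x - y) * e"
  shows "(1 + x * g) * (1 + x * e * y) + (1 + y * g) * (- (x * x * e)) = 1"
  unfolding assms by (simp add: algebra_simps)

lemma not_unit_in_mult: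
  assumes "is_subring S" "\<not> unit_in S x" "s \<in> S"
  shows "\<not> unit_in S (x * s)"
  using assms by (metis is_subring_mult mult.assoc unit_in_def)

locale integral_subring =
  fixes \<iota> :: "'R::idom \<Rightarrow> 'L::field" and S :: "'L set"
  assumes hom: "is_ring_hom \<iota>"
    and inj: "inj \<iota>"
    and subring: "is_subring S"
    and image_subset: "range \<iota> \<subseteq> S"
    and integral: "S \<subseteq> integral_closure \<iota>"
begin

lemma image_in: "\<iota> r \<in> S"
  using image_subset by auto

lemma image_eq_0_iff: "\<iota> r = 0 \<longleftrightarrow> r = 0"
  using inj is_ring_hom_0[OF hom] by (metis injD)

lemma poly_map_in: "x \<in> S \<Longrightarrow> poly (map_poly \<iota> f) x \<in> S"
  by (induction f) (simp_all add: map_poly_pCons is_ring_hom_0[OF hom]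
      is_subring_0[OF subring] is_subring_add[OF subring] is_subring_mult[OF subring] image_in)

lemma root_divides_image:
  assumes "f \<noteq> 0" "b \<in> S" "b \<noteq> 0" "poly (map_poly \<iota> f) b = 0"
  shows "\<exists>c s. c \<noteq> 0 \<and> s \<in> S \<and> \<iota> c = b * s"
  using assms(1,4)
proof (induction f)
  case (pCons a p)
  have eq: "\<iota> a + b * poly (map_poly \<iota> p) b = 0"
    using pCons.prems by (simp add: map_poly_pCons is_ring_hom_0[OF hom])
  show ?case
  proof (cases "a = 0")
    case False
    have "\<iota> a = b * (- poly (map_poly \<iota> p) b)"
      using eq by (simp add: eq_neg_iff_add_eq_0)
    moreover have "- poly (map_poly \<iota> p) b \<in> S"
      using assms(2) by (simp add: is_subring_uminus[OF subring] poly_map_in)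
    ultimately show ?thesis using False by blast
  next
    case True
    with eq pCons.prems assms(3) show ?thesis
      by (intro pCons.IH) (auto simp: is_ring_hom_0[OF hom])
  qed
qed simp

lemma divides_nonzero_image:
  assumes "b \<in> S" "b \<noteq> 0"
  shows "\<exists>c s. c \<noteq> 0 \<and> s \<in> S \<and> \<iota> c = b * s"
proof -
  obtain f where f: "lead_coeff f = 1" "poly (map_poly \<iota> f) b = 0"
    using assms(1) integral unfolding integral_closure_def by blast
  then have "f \<noteq> 0"
    by auto
  with f(2) show ?thesis
    using root_divides_image[OF _ assms] by blast
qed

text \<open>Clearing denominators in \<open>f (1 / \<iota> X)\<close>: the reversed polynomial of \<open>f\<close>, evaluated at \<open>X\<close>,
  has constant term \<open>lead_coeff f\<close>.\<close>
lemma power_mult_poly_at_inverse: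
  assumes "\<iota> X * y = 1"
  shows "\<exists>r. \<iota> X ^ degree f * poly (map_poly \<iota> f) y = \<iota> (lead_coeff f + X * r)"
proof (induction f)
  case 0
  show ?case by (auto simp: is_ring_hom_0[OF hom] intro: exI[of _ 0])
next
  case (pCons a p)
  then obtain r where r: "\<iota> X ^ degree p * poly (map_poly \<iota> p) y = \<iota> (lead_coeff p + X * r)"
    by blast
  show ?case
  proof (cases "p = 0")
    case True
    then show ?thesis by (auto simp: map_poly_pCons is_ring_hom_0[OF hom] intro: exI[of _ 0])
  next
    case False
    have "\<iota> X ^ degree (pCons a p) * poly (map_poly \<iota> (pCons a p)) y
        = \<iota> X ^ Suc (degree p) * \<iota> a + (\<iota> X * y) * (\<iota> X ^ degree p * poly (map_poly \<iota> p) y)"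
      using False by (simp add: map_poly_pCons is_ring_hom_0[OF hom] algebra_simps)
    also have "\<dots> = \<iota> (lead_coeff (pCons a p) + X * (r + X ^ degree p * a))"
      using False r assms
      by (simp add: is_ring_hom_add[OF hom] is_ring_hom_mult[OF hom] is_ring_hom_power[OF hom]
          algebra_simps)
    finally show ?thesis by blast
  qed
qed

lemma unit_in_image_imp_is_unit:
  assumes "unit_in S (\<iota> X)"
  shows "X dvd 1"
proof -
  obtain y where y: "y \<in> S" "\<iota> X * y = 1"
    using assms unfolding unit_in_def by blast
  then obtain f where f: "lead_coeff f = 1" "poly (map_poly \<iota> f) y = 0"
    using integral unfolding integral_closure_def by blast
  obtain r where "\<iota> X ^ degree f * poly (map_poly \<iota> f) y = \<iota> (lead_coeff f + X * r)"
    using power_mult_poly_at_inverse[OF y(2)] by blast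
  then have "1 + X * r = 0"
    using f by (simp add: image_eq_0_iff)
  then have "X * (- r) = 1"
    by (metis add.commute add_eq_0_iff mult_minus_right)
  then show ?thesis
    by (metis dvdI)
qed

lemma not_unit_in_image_mult:
  "\<not> X dvd 1 \<Longrightarrow> s \<in> S \<Longrightarrow> \<not> unit_in S (\<iota> X * s)"
  using not_unit_in_mult[OF subring] unit_in_image_imp_is_unit by blast

lemma shift_keeps_image_factor:
  assumes "1 + b * h = \<iota> X * s" "M = X * Y"
  shows "1 + b * (h + \<iota> M * k) = \<iota> X * (s + b * \<iota> Y * k)"
  using assms by (simp add: is_ring_hom_mult[OF hom] algebra_simps)

lemma shift_creates_image_factor:
  assumes "\<iota> c = b * s"
  shows "1 + b * (h + \<iota> M * (s * \<iota> t * (1 + b * h))) = \<iota> (1 + t * (c * M)) * (1 + b * h)"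
  using assms
  by (simp add: is_ring_hom_add[OF hom] is_ring_hom_mult[OF hom] is_ring_hom_1[OF hom] algebra_simps)

end

text \<open>For \<open>R = \<bbbF>\<^sub>q[t]\<close> take \<open>t\<close> to be the variable: then \<open>1 + t C\<close> has positive degree.\<close>
locale integral_subring_nonunit_shifts = integral_subring \<iota> S
    for \<iota> :: "'R::idom \<Rightarrow> 'L::field" and S +
  assumes nonunit_shift: "(C::'R) \<noteq> 0 \<Longrightarrow> \<exists>t. 1 + t * C \<noteq> 0 \<and> \<not> (1 + t * C) dvd 1"
begin

lemma exists_nonunit_comaximal:
  assumes "finite A" "A \<subseteq> S"
  shows "\<exists>x\<in>S. x \<noteq> 0 \<and> \<not> unit_in S x \<and>
           (\<forall>a\<in>A - {0}. ideal_sum (pideal S x) (pideal S a) = S)"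
proof -
  have "\<forall>a\<in>A - {0}. \<exists>c s. c \<noteq> 0 \<and> s \<in> S \<and> \<iota> c = a * s"
    using assms(2) divides_nonzero_image by blast
  then obtain c s where cs: "\<And>a. a \<in> A - {0} \<Longrightarrow> c a \<noteq> 0 \<and> s a \<in> S \<and> \<iota> (c a) = a * s a"
    by metis
  define C where "C = (\<Prod>a\<in>A - {0}. c a)"
  have "C \<noteq> 0"
    unfolding C_def using cs assms(1) by auto
  then obtain t where t: "1 + t * C \<noteq> 0" "\<not> (1 + t * C) dvd 1"
    using nonunit_shift by blast
  show ?thesis
  proof (intro bexI[of _ "\<iota> (1 + t * C)"] conjI ballI)
    show "\<iota> (1 + t * C) \<in> S"
      by (rule image_in)
    show "\<iota> (1 + t * C) \<noteq> 0"
      using t(1) by (simp add: image_eq_0_iff)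
    show "\<not> unit_in S (\<iota> (1 + t * C))"
      using t(2) unit_in_image_imp_is_unit by blast
    fix a assume a: "a \<in> A - {0}"
    have "c a dvd C"
      unfolding C_def using a assms(1) by (intro dvd_prodI) auto
    then obtain r where r: "C = c a * r"
      by (elim dvdE)
    have bezout: "\<iota> (1 + t * C) * 1 + a * (- (\<iota> t * s a * \<iota> r)) = 1"
      using cs[OF a] unfolding r
      by (simp add: is_ring_hom_add[OF hom] is_ring_hom_mult[OF hom] is_ring_hom_1[OF hom]
          algebra_simps)
    have "- (\<iota> t * s a * \<iota> r) \<in> S"
      using cs[OF a] image_in by (simp add: is_subring_uminus[OF subring] is_subring_mult[OF subring])
    moreover have "a \<in> S"
      using a assms(2) by blast
    ultimately show "ideal_sum (pideal S (\<iota> (1 + t * C))) (pideal S a) = S"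
      using ideal_sum_pideal_eq_if_bezout[OF subring image_in _ is_subring_1[OF subring] _ bezout]
      by blast
  qed
qed

text \<open>A Chinese-remainder construction: the factors \<open>X\<close> found so far divide \<open>M\<close>, so shifting \<open>h\<close> by a
  multiple of \<open>\<iota> M\<close> keeps them, while the shift is chosen to create a factor for the new element.\<close>
lemma exists_shift_with_nonunit_factors:
  assumes "finite B" "B \<subseteq> S" "0 \<notin> B"
  shows "\<exists>h M. h \<in> S \<and> M \<noteq> 0 \<and>
           (\<forall>b\<in>B. \<exists>X s. \<not> X dvd 1 \<and> X dvd M \<and> s \<in> S \<and> 1 + b * h = \<iota> X * s)"
  using assms
proof (induction B rule: finite_induct)
  case empty
  show ?case
    using is_subring_0[OF subring] by (intro exI[of _ 0] exI[of _ 1]) auto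
next
  case (insert b' B)
  then obtain h M where hM: "h \<in> S" "M \<noteq> 0"
      "\<forall>b\<in>B. \<exists>X s. \<not> X dvd 1 \<and> X dvd M \<and> s \<in> S \<and> 1 + b * h = \<iota> X * s"
    by auto
  have b': "b' \<in> S" "b' \<noteq> 0"
    using insert.prems by auto
  obtain c' s' where cs': "c' \<noteq> 0" "s' \<in> S" "\<iota> c' = b' * s'"
    using divides_nonzero_image[OF b'] by blast
  then obtain t where t: "1 + t * (c' * M) \<noteq> 0" "\<not> (1 + t * (c' * M)) dvd 1"
    using nonunit_shift[of "c' * M"] hM(2) by auto
  define X' where "X' = 1 + t * (c' * M)"
  define k where "k = s' * \<iota> t * (1 + b' * h)"
  have kS: "k \<in> S"
    unfolding k_def using cs'(2) b'(1) hM(1) image_in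
    by (simp add: is_subring_1[OF subring] is_subring_add[OF subring] is_subring_mult[OF subring])
  have h'S: "h + \<iota> M * k \<in> S"
    using hM(1) kS image_in by (simp add: is_subring_add[OF subring] is_subring_mult[OF subring])
  have MX': "M * X' \<noteq> 0"
    using hM(2) t(1) X'_def by simp
  have factors: "\<forall>b\<in>insert b' B.
      \<exists>X s. \<not> X dvd 1 \<and> X dvd M * X' \<and> s \<in> S \<and> 1 + b * (h + \<iota> M * k) = \<iota> X * s"
  proof
    fix b assume b: "b \<in> insert b' B"
    show "\<exists>X s. \<not> X dvd 1 \<and> X dvd M * X' \<and> s \<in> S \<and> 1 + b * (h + \<iota> M * k) = \<iota> X * s"
    proof (cases "b = b'")
      case True
      have "1 + b' * h \<in> S"
        using b'(1) hM(1) by (simp add: is_subring_1[OF subring] is_subring_add[OF subring]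
            is_subring_mult[OF subring])
      moreover have "X' dvd M * X'"
        by simp
      ultimately show ?thesis
        using True t(2) shift_creates_image_factor[OF cs'(3), of h M t]
        unfolding k_def X'_def by (intro exI[of _ X'] exI[of _ "1 + b' * h"]) (simp add: X'_def)
    next
      case False
      with b have "b \<in> B"
        by simp
      then obtain X s where Xs: "\<not> X dvd 1" "X dvd M" "s \<in> S" "1 + b * h = \<iota> X * s"
        using hM(3) by (elim ballE exE conjE) auto
      then obtain Y where Y: "M = X * Y"
        by (elim dvdE)
      have "s + b * \<iota> Y * k \<in> S"
        using Xs(3) kS image_in b insert.prems(1)
        by (auto intro!: is_subring_add[OF subring] is_subring_mult[OF subring])
      moreover have "X dvd M * X'"
        using Xs(2) by (rule dvd_mult2)
      ultimately show ?thesis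
        using Xs(1) shift_keeps_image_factor[OF Xs(4) Y] by blast
    qed
  qed
  show ?case
    by (rule exI[of _ "h + \<iota> M * k"], rule exI[of _ "M * X'"]) (use h'S MX' factors in blast)
qed

lemma exists_shift_pairwise_comaximal:
  assumes A: "finite A" "A \<subseteq> S" "0 \<notin> A" and a: "a \<in> S" "a \<noteq> 0" "\<not> unit_in S a"
  shows "\<exists>g\<in>S.
           (\<forall>ai\<in>A. 1 + ai * g \<noteq> 0 \<and> \<not> unit_in S (1 + ai * g)) \<and>
           (\<forall>ai\<in>A. ideal_sum (pideal S a) (pideal S (1 + ai * g)) = S) \<and>
           (\<forall>ai\<in>A. \<forall>aj\<in>A. ai \<noteq> aj \<longrightarrow>
              ideal_sum (pideal S (1 + ai * g)) (pideal S (1 + aj * g)) = S)"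
proof -
  define P where "P = {(x, y). x \<in> A \<and> y \<in> A \<and> x \<noteq> y}"
  have fP: "finite P"
    using A(1) by (intro finite_subset[of P "A \<times> A"]) (auto simp: P_def)
  have diff_in: "fst q - snd q \<in> S" if "q \<in> P" for q
    using that A(2) by (auto simp: P_def intro!: is_subring_diff[OF subring])
  define D where "D = (\<Prod>q\<in>P. fst q - snd q)"
  have D: "D \<noteq> 0" "D \<in> S"
    using fP diff_in by (auto simp: D_def P_def intro: is_subring_prod[OF subring])
  define B where "B = (\<lambda>ai. ai * a * D) ` A"
  have B: "finite B" "B \<subseteq> S" "0 \<notin> B"
    using A a(1,2) D by (auto simp: B_def is_subring_mult[OF subring])
  obtain h M where h: "h \<in> S"
      "\<forall>b\<in>B. \<exists>X s. \<not> X dvd 1 \<and> X dvd M \<and> s \<in> S \<and> 1 + b * h = \<iota> X * s"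
    using exists_shift_with_nonunit_factors[OF B] by auto
  define g where "g = a * D * h"
  have gS: "g \<in> S"
    unfolding g_def using a(1) D(2) h(1) by (simp add: is_subring_mult[OF subring])
  show ?thesis
  proof (intro bexI[OF _ gS] conjI ballI impI)
    fix ai assume ai: "ai \<in> A"
    then have aiS: "ai \<in> S"
      using A(2) by blast
    obtain X s where Xs: "\<not> X dvd 1" "s \<in> S" "1 + (ai * a * D) * h = \<iota> X * s"
      using h(2) ai unfolding B_def by blast
    then have "1 + ai * g = \<iota> X * s"
      by (simp add: g_def mult.assoc mult.left_commute)
    then show "\<not> unit_in S (1 + ai * g)"
      using not_unit_in_image_mult[OF Xs(1,2)] by simp
    have bezout: "a * (- (ai * D * h)) + (1 + ai * g) * 1 = 1"
      by (simp add: g_def algebra_simps)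
    have m: "- (ai * D * h) \<in> S"
      using aiS D(2) h(1) by (simp add: is_subring_mult[OF subring] is_subring_uminus[OF subring])
    have "1 + ai * g \<in> S"
      using aiS gS by (simp add: is_subring_add[OF subring] is_subring_mult[OF subring]
          is_subring_1[OF subring])
    then show "ideal_sum (pideal S a) (pideal S (1 + ai * g)) = S"
      by (rule ideal_sum_pideal_eq_if_bezout[OF subring a(1) _ m is_subring_1[OF subring] bezout])
    show "1 + ai * g \<noteq> 0"
    proof
      assume "1 + ai * g = 0"
      with bezout have "a * (- (ai * D * h)) = 1"
        by simp
      with a(3) m show False
        unfolding unit_in_def by blast
    qed
  next
    fix ai aj assume ai: "ai \<in> A" and aj: "aj \<in> A" and ne: "ai \<noteq> aj"
    then have "(ai, aj) \<in> P"
      by (simp add: P_def)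
    define E where "E = (\<Prod>q\<in>P - {(ai, aj)}. fst q - snd q)"
    have DE: "D = (ai - aj) * E"
      unfolding D_def E_def using prod.remove[OF fP \<open>(ai, aj) \<in> P\<close>, of "\<lambda>q. fst q - snd q"]
      by simp
    have "g = (ai - aj) * (a * E * h)"
      unfolding g_def DE by (simp add: algebra_simps)
    from one_plus_mult_bezout[OF this]
    show "ideal_sum (pideal S (1 + ai * g)) (pideal S (1 + aj * g)) = S"
    proof (rule ideal_sum_pideal_eq_if_bezout[OF subring, rotated 4])
      have "E \<in> S"
        unfolding E_def using diff_in by (auto intro: is_subring_prod[OF subring])
      then show "1 + ai * (a * E * h) * aj \<in> S" "- (ai * ai * (a * E * h)) \<in> S"
        using ai aj A(2) a(1) h(1)
        by (auto intro!: is_subring_add[OF subring] is_subring_mult[OF subring]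
            is_subring_uminus[OF subring] is_subring_1[OF subring])
      show "1 + ai * g \<in> S" "1 + aj * g \<in> S"
        using ai aj A(2) gS
        by (auto intro!: is_subring_add[OF subring] is_subring_mult[OF subring] is_subring_1[OF subring])
    qed
  qed
qed

end

lemma poly_one_plus_X_mult_nonunit:
  fixes C :: "'a::field poly"
  assumes "C \<noteq> 0"
  shows "1 + [:0, 1:] * C \<noteq> 0 \<and> \<not> (1 + [:0, 1:] * C) dvd 1"
proof -
  have "degree ([:0, 1:] * C) = Suc (degree C)"
    using assms by (simp add: degree_mult_eq)
  then have "degree (1 + [:0, 1:] * C) = Suc (degree C)"
    by (subst degree_add_eq_right) auto
  moreover from this have "1 + [:0, 1:] * C \<noteq> 0"
    by (metis degree_0 nat.distinct(1))
  ultimately show ?thesis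
    by (simp add: is_unit_iff_degree)
qed

theorem lemma2p17:
  fixes p q :: nat
    and \<phi> :: "'k::{field,finite} poly fract \<Rightarrow> 'L::field"
    and S :: "'L set"
  assumes "prime p" and "odd p" and "CHAR('k) = p" and "card (UNIV :: 'k set) = q" and "\<exists>n. q = p ^ n"
    and "is_separable_closure \<phi>"
    and "is_subring S"
    and "range (\<lambda>r. \<phi> (Fract r 1)) \<subseteq> S"
    and "S \<subseteq> integral_closure (\<lambda>r. \<phi> (Fract r 1))"
  shows "(\<forall>A. finite A \<and> A \<subseteq> S \<longrightarrow>
            (\<exists>x\<in>S. x \<noteq> 0 \<and> \<not> unit_in S x \<and>
               (\<forall>ai\<in>A - {0}. ideal_sum (pideal S x) (pideal S ai) = S)))
      \<and> (\<forall>A a. finite A \<and> A \<subseteq> S \<and> 0 \<notin> A \<and> a \<in> S \<and> a \<noteq> 0 \<and> \<not> unit_in S a \<longrightarrow>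
            (\<exists>g\<in>S.
               (\<forall>ai\<in>A. 1 + ai * g \<noteq> 0 \<and> \<not> unit_in S (1 + ai * g)) \<and>
               (\<forall>ai\<in>A. ideal_sum (pideal S a) (pideal S (1 + ai * g)) = S) \<and>
               (\<forall>ai\<in>A. \<forall>aj\<in>A. ai \<noteq> aj \<longrightarrow>
                  ideal_sum (pideal S (1 + ai * g)) (pideal S (1 + aj * g)) = S)))"
proof -
  have "is_ring_hom \<phi>"
    using assms(6) by (simp add: is_separable_closure_def)
  then have hom: "is_ring_hom (\<phi> \<circ> (\<lambda>r. Fract r 1))" and inj: "inj (\<phi> \<circ> (\<lambda>r. Fract r 1))"
    by (simp_all add: is_ring_hom_comp is_ring_hom_Fract_1 inj_compose is_ring_hom_field_inj
        inj_Fract_1)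
  interpret integral_subring_nonunit_shifts "\<lambda>r. \<phi> (Fract r 1)" S
  proof
    show "is_ring_hom (\<lambda>r. \<phi> (Fract r 1))" "inj (\<lambda>r. \<phi> (Fract r 1))"
      using hom inj by (simp_all add: comp_def)
    show "\<exists>t. 1 + t * C \<noteq> 0 \<and> \<not> (1 + t * C) dvd 1" if "C \<noteq> 0" for C :: "'k poly"
      using poly_one_plus_X_mult_nonunit[OF that] by blast
  qed (use assms(7-9) in auto)
  show ?thesis
    by (intro conjI allI impI; elim conjE)
      (assumption | rule exists_nonunit_comaximal exists_shift_pairwise_comaximal)+
qed

end
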